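(* Assume (A1), (A2) below. For any bounded measurable $\zeta:\Omega\to\mathbb R$, with $v(t)=P_t\zeta$ and $\bar v(t,x)=v(t)(\theta_x\omega)$, $$\frac{d}{dt}\mathrm{Var}_{\mathbb Q}(v(t))\lesssim-\sum_{e\in\mathbb Z^d:|e|=1}E_{\mathbb Q}\big[(\bar v(t,e)-\bar v(t,0))^2\big],$$ with implicit constant depending only on $d,\kappa$.
   Context: An environment is $\omega:\mathbb Z^d\to\{$positive-definite diagonal matrices$\}$, $\omega(x)=\mathrm{diag}[\omega_1(x),\dots,\omega_d(x)]$; $\Omega$ is the set of environments with law $\mathbb P$; $(\theta_x\omega)(\cdot)=\omega(x+\cdot)$. (A1) $\{\omega(x)\}$ i.i.d. under $\mathbb P$; (A2) $\omega/\mathrm{tr}\,\omega\ge2\kappa I$ a.s., $\kappa\in(0,\frac1{2d}]$. $(Y_t)$ is the continuous-time Markov process with generator $L_\omega u(x)=\sum_i\frac{\omega_i(x)}{2\mathrm{tr}\,\omega(x)}[u(x+e_i)+u(x-e_i)-2u(x)]$, $P_t\zeta(\omega)=E^0_\omega[\zeta(\theta_{Y_t}\omega)]$. $\mathbb Q$ is the unique probability measure on $\Omega$ equivalent to $\mathbb P$ that is invariant and ergodic for the environment viewed from the particle $\theta_{Y_t}\omega$. *)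

theory Defs
  imports "HOL-Probability.Probability"
begin

text \<open>Lattice sites Z^d are functions 'd => int with 'd a finite index type (dimension d = CARD('d)).
An environment assigns to each site the diagonal entries (omega_1(x),...,omega_d(x)).\<close>

type_synonym 'd site = "'d \<Rightarrow> int"
type_synonym 'd env = "'d site \<Rightarrow> ('d \<Rightarrow> real)"

definition origin :: "'d site" where
  "origin = (\<lambda>_. 0)"

definition unitvec :: "'d \<Rightarrow> 'd site" where
  "unitvec i = (\<lambda>j. if j = i then 1 else 0)"

definition shift :: "'d site \<Rightarrow> 'd env \<Rightarrow> 'd env" where
  "shift x \<omega> = (\<lambda>y. \<omega> (\<lambda>j. x j + y j))"

definition unit_sites :: "('d::finite) site set" where
  "unit_sites = {e. (\<Sum>j\<in>UNIV. (e j)^2) = 1}"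

text \<open>Positive definite diagonal matrices, represented by their diagonal.\<close>
definition pos_diag :: "('d::finite \<Rightarrow> real) set" where
  "pos_diag = {a. \<forall>i. 0 < a i}"

definition tr :: "('d::finite \<Rightarrow> real) \<Rightarrow> real" where
  "tr a = (\<Sum>j\<in>UNIV. a j)"

text \<open>Generator of the environment viewed from the particle:
  (L zeta)(omega) = L_omega zetabar (0), zetabar(x) = zeta(theta_x omega).\<close>
definition gen_env :: "(('d::finite) env \<Rightarrow> real) \<Rightarrow> 'd env \<Rightarrow> real" where
  "gen_env \<zeta> \<omega> = (\<Sum>i\<in>UNIV. \<omega> origin i / (2 * tr (\<omega> origin)) *
      (\<zeta> (shift (unitvec i) \<omega>) + \<zeta> (shift (\<lambda>j. - unitvec i j) \<omega>) - 2 * \<zeta> \<omega>))"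

text \<open>P_t zeta (omega) = E^0_omega[zeta(theta_{Y_t} omega)], i.e. the semigroup exp(t L)
  (L is a bounded operator on bounded functions, so the exponential series converges).\<close>
definition semigroup :: "real \<Rightarrow> (('d::finite) env \<Rightarrow> real) \<Rightarrow> 'd env \<Rightarrow> real" where
  "semigroup t \<zeta> \<omega> = (\<Sum>n. t ^ n / fact n * (gen_env ^^ n) \<zeta> \<omega>)"

text \<open>The i.i.d. law P on environments, with one-site marginal mu (assumption (A1)).\<close>
definition env_measure :: "('d::finite \<Rightarrow> real) measure \<Rightarrow> 'd env measure" where
  "env_measure \<mu> = PiM UNIV (\<lambda>_::'d site. \<mu>)"

definition bounded_fun :: "'a measure \<Rightarrow> ('a \<Rightarrow> real) \<Rightarrow> bool" where
  "bounded_fun M f \<longleftrightarrow> (\<exists>B. \<forall>x\<in>space M. \<bar>f x\<bar> \<le> B)"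

definition invariant_ergodic_equiv :: "('d::finite) env measure \<Rightarrow> 'd env measure \<Rightarrow> bool" where
  "invariant_ergodic_equiv P Q \<longleftrightarrow>
     prob_space Q \<and> sets Q = sets P \<and>
     absolutely_continuous P Q \<and> absolutely_continuous Q P \<and>
     (\<forall>f t. f \<in> borel_measurable Q \<longrightarrow> bounded_fun Q f \<longrightarrow> 0 \<le> t \<longrightarrow>
          (\<integral>\<omega>. semigroup t f \<omega> \<partial>Q) = (\<integral>\<omega>. f \<omega> \<partial>Q)) \<and>
     (\<forall>A\<in>sets Q. (\<forall>t\<ge>0. AE \<omega> in Q. semigroup t (indicator A) \<omega> = indicator A \<omega>)
          \<longrightarrow> measure Q A = 0 \<or> measure Q A = 1)"

end

theory Submission
  imports Defs
begin

text \<open>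
  The generator L of the environment viewed from the particle is a bounded operator, so
  P_s = exp (s L) is a power series in s that can be differentiated termwise. Invariance of Q
  gives E_Q [P_s g] = E_Q [g] for s \<ge> 0, hence E_Q [L g] = 0 for bounded g. Differentiating
  under the integral, the variance of v = P_t \<zeta> has derivative 2 E_Q [(v - m) L v], where
  m = E_Q [\<zeta>] is the constant mean. The identity L (u^2) = 2 u L u + \<Gamma> u, with the carre du
  champ \<Gamma> u the rate-weighted sum of the squared increments of u towards the 2d neighbours,
  turns this into - E_Q [\<Gamma> (v - m)]. Ellipticity bounds every rate \<omega>_i / (2 tr \<omega>) below
  by \<kappa>, so \<Gamma> u \<ge> \<kappa> \<Sum>_|e|=1 (u \<circ> \<theta>_e - u)^2 and C = \<kappa> works.
\<close>

section \<open>Second-order remainder estimates\<close>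

lemma Taylor_quadratic_remainder_bound:
  fixes f f' f'' :: "real \<Rightarrow> real"
  assumes "convex S"
    and f': "\<And>x. x \<in> S \<Longrightarrow> (f has_real_derivative f' x) (at x within S)"
    and f'': "\<And>x. x \<in> S \<Longrightarrow> (f' has_real_derivative f'' x) (at x within S)"
    and K: "\<And>x. x \<in> S \<Longrightarrow> \<bar>f'' x\<bar> \<le> K"
    and s: "s \<in> S" and t: "t \<in> S"
  shows "\<bar>f s - f t - (s - t) * f' t\<bar> \<le> K * (s - t)^2"
proof -
  have segment: "closed_segment t s \<subseteq> S"
    by (rule closed_segment_subset[OF t s \<open>convex S\<close>])
  have f'_Lipschitz: "\<bar>f' x - f' t\<bar> \<le> K * \<bar>s - t\<bar>" if x: "x \<in> closed_segment t s" for x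
  proof -
    have "norm (f' x - f' t) \<le> K * norm (x - t)"
      by (rule field_differentiable_bound[OF \<open>convex S\<close> f'']) (use K x segment t in auto)
    then have "\<bar>f' x - f' t\<bar> \<le> K * \<bar>x - t\<bar>"
      by simp
    also have "\<dots> \<le> K * \<bar>s - t\<bar>"
      using dist_in_closed_segment[OF x] K[OF t]
      by (intro mult_left_mono) (auto simp: dist_real_def)
    finally show ?thesis .
  qed
  have onorm_mult: "onorm (\<lambda>h. c * h) \<le> \<bar>c\<bar>" for c :: real
    by (rule onorm_le) (simp add: abs_mult)
  have "norm (f s - f t - f' t * (s - t)) \<le> norm (s - t) * (K * \<bar>s - t\<bar>)"
  proof (rule differentiable_bound_linearization[where S="closed_segment t s" and f'="\<lambda>x h. f' x * h"])
    show "t + u *\<^sub>R (s - t) \<in> closed_segment t s" if "u \<in> {0..1}" for u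
      using that by (auto simp: closed_segment_def algebra_simps intro!: exI[of _ u])
    show "(f has_derivative (\<lambda>h. f' x * h)) (at x within closed_segment t s)"
      if "x \<in> closed_segment t s" for x
      using has_field_derivative_subset[OF f'[of x] segment] that segment
      by (auto intro: has_field_derivative_imp_has_derivative)
    show "onorm ((\<lambda>h. f' x * h) - (\<lambda>h. f' t * h)) \<le> K * \<bar>s - t\<bar>"
      if "x \<in> closed_segment t s" for x
      using f'_Lipschitz[OF that] onorm_mult[of "f' x - f' t"]
      by (simp add: fun_diff_def left_diff_distrib)
  qed simp
  also have "norm (s - t) * (K * \<bar>s - t\<bar>) = K * (s - t)^2"
    by (metis abs_mult_self_eq mult.left_commute power2_eq_square real_norm_def)
  finally show ?thesis by (simp add: mult.commute)
qed

lemma Taylor_square_remainder_bound: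
  fixes v w z :: "real \<Rightarrow> real"
  assumes "convex S"
    and v: "\<And>x. x \<in> S \<Longrightarrow> (v has_real_derivative w x) (at x)"
    and w: "\<And>x. x \<in> S \<Longrightarrow> (w has_real_derivative z x) (at x)"
    and bounds: "\<And>x. x \<in> S \<Longrightarrow> \<bar>v x - m\<bar> \<le> A \<and> \<bar>w x\<bar> \<le> A \<and> \<bar>z x\<bar> \<le> 2 * A"
    and "s \<in> S" and "t \<in> S"
  shows "\<bar>(v s - m)^2 - (v t - m)^2 - (s - t) * (2 * (v t - m) * w t)\<bar> \<le> 6 * A^2 * (s - t)^2"
proof (rule Taylor_quadratic_remainder_bound[where f="\<lambda>x. (v x - m)^2"
      and f'="\<lambda>x. 2 * (v x - m) * w x" and f''="\<lambda>x. 2 * (w x * w x + (v x - m) * z x)"])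
  fix x
  assume x: "x \<in> S"
  show "((\<lambda>x. (v x - m)^2) has_real_derivative 2 * (v x - m) * w x) (at x within S)"
    unfolding power2_eq_square
    by (rule has_field_derivative_at_within) (rule derivative_eq_intros v[OF x] refl | simp)+
  show "((\<lambda>x. 2 * (v x - m) * w x) has_real_derivative 2 * (w x * w x + (v x - m) * z x)) (at x within S)"
    by (rule has_field_derivative_at_within)
      (rule derivative_eq_intros v[OF x] w[OF x] refl | simp add: algebra_simps)+
  have "\<bar>w x * w x\<bar> \<le> A * A"
    unfolding abs_mult by (rule mult_mono') (use bounds[OF x] in auto)
  moreover have "\<bar>(v x - m) * z x\<bar> \<le> A * (2 * A)"
    unfolding abs_mult by (rule mult_mono') (use bounds[OF x] in auto)
  ultimately have "\<bar>2 * (w x * w x + (v x - m) * z x)\<bar> \<le> 2 * (A * A + A * (2 * A))"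
    using abs_triangle_ineq[of "w x * w x" "(v x - m) * z x"] by simp
  also have "\<dots> = 6 * A^2"
    by (simp add: power2_eq_square algebra_simps)
  finally show "\<bar>2 * (w x * w x + (v x - m) * z x)\<bar> \<le> 6 * A^2" .
qed (use assms in auto)

lemma has_real_derivative_if_quadratic_remainder:
  fixes G :: "real \<Rightarrow> real"
  assumes remainder: "\<And>s. s \<in> T \<Longrightarrow> \<bar>s - t\<bar> \<le> 1 \<Longrightarrow> \<bar>G s - G t - (s - t) * D\<bar> \<le> K * (s - t)^2"
  shows "(G has_real_derivative D) (at t within T)"
  unfolding has_field_derivative_iff
proof (rule LIM_zero_cancel, rule Lim_null_comparison)
  show "\<forall>\<^sub>F y in at t within T. norm ((G y - G t) / (y - t) - D) \<le> K * \<bar>y - t\<bar>"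
    unfolding eventually_at
  proof (intro exI[of _ 1] conjI ballI impI)
    fix y assume y: "y \<in> T" "y \<noteq> t \<and> dist y t < 1"
    then have ne: "y - t \<noteq> 0" and le1: "\<bar>y - t\<bar> \<le> 1" by (auto simp: dist_real_def)
    have "(G y - G t) / (y - t) - D = (G y - G t - (y - t) * D) / (y - t)"
      using ne by (simp add: field_simps)
    then have "norm ((G y - G t) / (y - t) - D) = \<bar>G y - G t - (y - t) * D\<bar> / \<bar>y - t\<bar>"
      by simp
    also have "\<dots> \<le> K * \<bar>y - t\<bar>^2 / \<bar>y - t\<bar>"
      using remainder[OF y(1) le1] by (simp add: divide_right_mono)
    also have "\<dots> = K * \<bar>y - t\<bar>"
      using ne by (simp add: power2_eq_square del: abs_mult_self_eq)
    finally show "norm ((G y - G t) / (y - t) - D) \<le> K * \<bar>y - t\<bar>" .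
  qed simp
  have "((\<lambda>y. K * \<bar>y - t\<bar>) \<longlongrightarrow> K * \<bar>t - t\<bar>) (at t within T)"
    by (intro tendsto_intros)
  then show "((\<lambda>y. K * \<bar>y - t\<bar>) \<longlongrightarrow> 0) (at t within T)"
    by simp
qed

lemma has_real_derivative_integral:
  fixes F :: "real \<Rightarrow> 'a \<Rightarrow> real"
  assumes "finite_measure M"
    and int_F: "\<And>s. integrable M (F s)" and int_F': "integrable M F'"
    and remainder: "\<And>s \<omega>. \<bar>s - t\<bar> \<le> 1 \<Longrightarrow> \<omega> \<in> space M \<Longrightarrow>
        \<bar>F s \<omega> - F t \<omega> - (s - t) * F' \<omega>\<bar> \<le> K * (s - t)^2"
  shows "((\<lambda>s. \<integral>\<omega>. F s \<omega> \<partial>M) has_real_derivative (\<integral>\<omega>. F' \<omega> \<partial>M)) (at t)"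
proof (rule has_real_derivative_if_quadratic_remainder[where K="K * measure M (space M)"])
  interpret finite_measure M by fact
  fix s :: real
  assume "\<bar>s - t\<bar> \<le> 1"
  have "(\<integral>\<omega>. F s \<omega> \<partial>M) - (\<integral>\<omega>. F t \<omega> \<partial>M) - (s - t) * (\<integral>\<omega>. F' \<omega> \<partial>M)
      = (\<integral>\<omega>. F s \<omega> - F t \<omega> - (s - t) * F' \<omega> \<partial>M)"
    using int_F int_F' by simp
  also have "\<bar>\<dots>\<bar> \<le> (\<integral>\<omega>. \<bar>F s \<omega> - F t \<omega> - (s - t) * F' \<omega>\<bar> \<partial>M)"
    by (rule integral_abs_bound)
  also have "\<dots> \<le> (\<integral>\<omega>. K * (s - t)^2 \<partial>M)"
    using int_F int_F' remainder[OF \<open>\<bar>s - t\<bar> \<le> 1\<close>] by (intro integral_mono) auto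
  also have "\<dots> = K * measure M (space M) * (s - t)^2"
    by simp
  finally show "\<bar>(\<integral>\<omega>. F s \<omega> \<partial>M) - (\<integral>\<omega>. F t \<omega> \<partial>M) - (s - t) * (\<integral>\<omega>. F' \<omega> \<partial>M)\<bar>
      \<le> K * measure M (space M) * (s - t)^2" .
qed

section \<open>The generator and its semigroup\<close>

definition env_space :: "('d::finite) env set" where
  "env_space = {\<omega>. \<forall>x. \<omega> x \<in> pos_diag}"

definition env_bounded :: "(('d::finite) env \<Rightarrow> real) \<Rightarrow> real \<Rightarrow> bool" where
  "env_bounded f B \<longleftrightarrow> (\<forall>\<omega>\<in>env_space. \<bar>f \<omega>\<bar> \<le> B)"

abbreviation jump_rate :: "('d::finite) env \<Rightarrow> 'd \<Rightarrow> real" where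
  "jump_rate \<omega> i \<equiv> \<omega> origin i / (2 * tr (\<omega> origin))"

lemma shift_in_env_space: "\<omega> \<in> env_space \<Longrightarrow> shift x \<omega> \<in> env_space"
  by (simp add: env_space_def shift_def)

lemma env_space_nonempty: "(\<lambda>x i. 1) \<in> env_space"
  by (simp add: env_space_def pos_diag_def)

lemma tr_gt_0: "\<omega> \<in> env_space \<Longrightarrow> 0 < tr (\<omega> x)"
  unfolding tr_def env_space_def pos_diag_def by (simp add: sum_pos)

lemma jump_rate_gt_0: "\<omega> \<in> env_space \<Longrightarrow> 0 < jump_rate \<omega> i"
  using tr_gt_0[of \<omega> origin] by (simp add: env_space_def pos_diag_def)

lemma sum_jump_rate: "\<omega> \<in> env_space \<Longrightarrow> (\<Sum>i\<in>UNIV. jump_rate \<omega> i) = 1/2"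
  using tr_gt_0[of \<omega> origin] by (simp add: sum_divide_distrib[symmetric] tr_def)

lemma env_boundedD: "env_bounded f B \<Longrightarrow> \<omega> \<in> env_space \<Longrightarrow> \<bar>f \<omega>\<bar> \<le> B"
  by (simp add: env_bounded_def)

lemma env_bounded_nonneg: "env_bounded f B \<Longrightarrow> 0 \<le> B"
  using env_boundedD[OF _ env_space_nonempty] abs_ge_zero order_trans by blast

lemma env_bounded_mult:
  assumes "env_bounded f A" and "env_bounded g B"
  shows "env_bounded (\<lambda>\<omega>. f \<omega> * g \<omega>) (A * B)"
  using assms env_bounded_nonneg[OF assms(1)]
  by (auto simp: env_bounded_def abs_mult intro!: mult_mono)

lemma env_bounded_const: "env_bounded (\<lambda>_. c) \<bar>c\<bar>"
  by (simp add: env_bounded_def)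

lemma env_bounded_diff:
  "env_bounded f A \<Longrightarrow> env_bounded g B \<Longrightarrow> env_bounded (\<lambda>\<omega>. f \<omega> - g \<omega>) (A + B)"
  unfolding env_bounded_def by (metis abs_triangle_ineq4 add_mono order_trans)

lemma env_bounded_power2: "env_bounded f A \<Longrightarrow> env_bounded (\<lambda>\<omega>. (f \<omega>)^2) (A * A)"
  using env_bounded_mult[of f A f A] by (simp add: power2_eq_square)

lemma env_bounded_shift: "env_bounded f B \<Longrightarrow> env_bounded (\<lambda>\<omega>. f (shift x \<omega>)) B"
  by (simp add: env_bounded_def shift_in_env_space)

lemma gen_env_bound:
  fixes f :: "('d::finite) env \<Rightarrow> real"
  assumes f: "env_bounded f B"
  shows "env_bounded (gen_env f) (2 * B)"
  unfolding env_bounded_def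
proof
  fix \<omega> :: "'d env"
  assume \<omega>: "\<omega> \<in> env_space"
  have "\<bar>gen_env f \<omega>\<bar> \<le> (\<Sum>i\<in>UNIV. jump_rate \<omega> i * (4 * B))"
    unfolding gen_env_def
  proof (rule order_trans[OF sum_abs sum_mono])
    fix i
    have "\<bar>f (shift (unitvec i) \<omega>) + f (shift (\<lambda>j. - unitvec i j) \<omega>) - 2 * f \<omega>\<bar> \<le> 4 * B"
      using f \<omega> shift_in_env_space[OF \<omega>] unfolding env_bounded_def by (smt (verit))
    moreover have c: "0 < jump_rate \<omega> i" by (rule jump_rate_gt_0[OF \<omega>])
    ultimately show "\<bar>jump_rate \<omega> i * (f (shift (unitvec i) \<omega>) + f (shift (\<lambda>j. - unitvec i j) \<omega>) - 2 * f \<omega>)\<bar>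
        \<le> jump_rate \<omega> i * (4 * B)"
      unfolding abs_mult abs_of_pos[OF c] by (metis mult_left_mono less_imp_le)
  qed
  also have "\<dots> = (\<Sum>i\<in>UNIV. jump_rate \<omega> i) * (4 * B)"
    by (rule sum_distrib_right[symmetric])
  also have "\<dots> = 2 * B"
    unfolding sum_jump_rate[OF \<omega>] by simp
  finally show "\<bar>gen_env f \<omega>\<bar> \<le> 2 * B" .
qed

lemma funpow_gen_env_bound: "env_bounded f B \<Longrightarrow> env_bounded ((gen_env ^^ n) f) (2^n * B)"
  by (induction n) (auto dest: gen_env_bound simp: mult.assoc)

lemma gen_env_mult_right: "gen_env (\<lambda>\<omega>. f \<omega> * c) \<omega> = gen_env f \<omega> * c"
  unfolding gen_env_def sum_distrib_right by (intro sum.cong refl) (simp add: algebra_simps)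

lemma gen_env_diff_const: "gen_env (\<lambda>\<omega>. f \<omega> - c) \<omega> = gen_env f \<omega>"
  unfolding gen_env_def by (intro sum.cong refl) (simp add: algebra_simps)

lemma gen_env_sums:
  assumes "\<And>\<omega>. \<omega> \<in> env_space \<Longrightarrow> (\<lambda>n. F n \<omega>) sums G \<omega>" and "\<omega> \<in> env_space"
  shows "(\<lambda>n. gen_env (F n) \<omega>) sums gen_env G \<omega>"
  unfolding gen_env_def
  by (intro sums_sum sums_mult sums_diff sums_add assms(1) shift_in_env_space assms(2))

definition semigroup_coeff :: "(('d::finite) env \<Rightarrow> real) \<Rightarrow> 'd env \<Rightarrow> nat \<Rightarrow> real" where
  "semigroup_coeff f \<omega> n = (gen_env ^^ n) f \<omega> / fact n"

lemma semigroup_eq_suminf: "semigroup s f \<omega> = (\<Sum>n. semigroup_coeff f \<omega> n * s^n)"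
  unfolding semigroup_def semigroup_coeff_def by (simp add: mult.commute)

lemma diffs_semigroup_coeff: "diffs (semigroup_coeff f \<omega>) = semigroup_coeff (gen_env f) \<omega>"
proof
  fix n
  have "(gen_env ^^ Suc n) f = (gen_env ^^ n) (gen_env f)"
    by (simp add: funpow_swap1)
  then show "diffs (semigroup_coeff f \<omega>) n = semigroup_coeff (gen_env f) \<omega> n"
    unfolding diffs_def semigroup_coeff_def fact_Suc by (simp del: of_nat_Suc)
qed

lemma exp_sums_real: "(\<lambda>n. x^n / fact n) sums exp (x::real)"
  using exp_converges[of x] by (simp add: divide_inverse mult.commute)

lemma semigroup_series_abs_bound:
  assumes "env_bounded f B" and "\<omega> \<in> env_space"
  shows "\<bar>semigroup_coeff f \<omega> n * s^n\<bar> \<le> B * ((2 * \<bar>s\<bar>)^n / fact n)"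
proof -
  have "\<bar>semigroup_coeff f \<omega> n * s^n\<bar> = \<bar>(gen_env ^^ n) f \<omega>\<bar> * \<bar>s\<bar>^n / fact n"
    by (simp add: semigroup_coeff_def abs_mult power_abs)
  also have "\<dots> \<le> 2^n * B * \<bar>s\<bar>^n / fact n"
    using env_boundedD[OF funpow_gen_env_bound[OF assms(1)] assms(2)]
    by (simp add: divide_right_mono mult_right_mono)
  also have "\<dots> = B * ((2 * \<bar>s\<bar>)^n / fact n)"
    by (simp add: power_mult_distrib field_simps)
  finally show ?thesis .
qed

lemma semigroup_sums:
  assumes "env_bounded f B" and "\<omega> \<in> env_space"
  shows "(\<lambda>n. semigroup_coeff f \<omega> n * s^n) sums semigroup s f \<omega>"
proof -
  have "summable (\<lambda>n. B * ((2 * \<bar>s\<bar>)^n / fact n))"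
    by (intro summable_mult sums_summable[OF exp_sums_real])
  then have "summable (\<lambda>n. semigroup_coeff f \<omega> n * s^n)"
    by (rule summable_comparison_test') (use semigroup_series_abs_bound[OF assms] in auto)
  then show ?thesis unfolding semigroup_eq_suminf by (rule summable_sums)
qed

lemma semigroup_bound:
  fixes f :: "('d::finite) env \<Rightarrow> real"
  assumes f: "env_bounded f B"
  shows "env_bounded (semigroup s f) (B * exp (2 * \<bar>s\<bar>))"
  unfolding env_bounded_def
proof
  fix \<omega> :: "'d env"
  assume \<omega>: "\<omega> \<in> env_space"
  let ?a = "\<lambda>n. semigroup_coeff f \<omega> n * s^n"
  have majorant: "(\<lambda>n. B * ((2 * \<bar>s\<bar>)^n / fact n)) sums (B * exp (2 * \<bar>s\<bar>))"
    by (intro sums_mult exp_sums_real)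
  have "summable (\<lambda>n. \<bar>?a n\<bar>)"
    using semigroup_series_abs_bound[OF f \<omega>]
    by (intro summable_comparison_test'[OF sums_summable[OF majorant]]) auto
  then have "\<bar>semigroup s f \<omega>\<bar> \<le> (\<Sum>n. \<bar>?a n\<bar>)"
    unfolding semigroup_eq_suminf by (rule summable_rabs)
  also have "\<dots> \<le> B * exp (2 * \<bar>s\<bar>)"
    using semigroup_series_abs_bound[OF f \<omega>] \<open>summable (\<lambda>n. \<bar>?a n\<bar>)\<close>
    by (intro sums_le[OF _ summable_sums majorant]) auto
  finally show "\<bar>semigroup s f \<omega>\<bar> \<le> B * exp (2 * \<bar>s\<bar>)" .
qed

lemma semigroup_0 [simp]: "semigroup 0 f \<omega> = f \<omega>"
  unfolding semigroup_eq_suminf powser_zero by (simp add: semigroup_coeff_def)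

lemma has_real_derivative_semigroup:
  assumes "env_bounded f B" and "\<omega> \<in> env_space"
  shows "((\<lambda>s. semigroup s f \<omega>) has_real_derivative semigroup s (gen_env f) \<omega>) (at s)"
  unfolding semigroup_eq_suminf diffs_semigroup_coeff[symmetric]
  using semigroup_sums[OF assms] by (intro termdiffs_strong_converges_everywhere sums_summable)

lemma gen_env_semigroup:
  assumes f: "env_bounded f B" and \<omega>: "\<omega> \<in> env_space"
  shows "gen_env (semigroup s f) \<omega> = semigroup s (gen_env f) \<omega>"
proof -
  have "gen_env (\<lambda>\<omega>'. semigroup_coeff f \<omega>' n * s^n) \<omega> = semigroup_coeff (gen_env f) \<omega> n * s^n"
    for n
    using gen_env_mult_right[of "(gen_env ^^ n) f" "s^n / fact n" \<omega>]
    by (simp add: semigroup_coeff_def funpow_swap1)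
  moreover have "(\<lambda>n. gen_env (\<lambda>\<omega>'. semigroup_coeff f \<omega>' n * s^n) \<omega>) sums gen_env (semigroup s f) \<omega>"
    using semigroup_sums[OF f] \<omega> by (rule gen_env_sums)
  ultimately have "(\<lambda>n. semigroup_coeff (gen_env f) \<omega> n * s^n) sums gen_env (semigroup s f) \<omega>"
    by simp
  then show ?thesis
    using semigroup_sums[OF gen_env_bound[OF f] \<omega>] by (rule sums_unique2)
qed

lemma semigroup_funpow_gen_env_bound:
  fixes f :: "('d::finite) env \<Rightarrow> real"
  assumes f: "env_bounded f B" and \<omega>: "\<omega> \<in> env_space" and x: "\<bar>x - t\<bar> \<le> 1"
  shows "\<bar>semigroup x ((gen_env ^^ n) f) \<omega>\<bar> \<le> 2^n * B * exp (2 * (\<bar>t\<bar> + 1))"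
proof -
  have "\<bar>semigroup x ((gen_env ^^ n) f) \<omega>\<bar> \<le> 2^n * B * exp (2 * \<bar>x\<bar>)"
    by (rule env_boundedD[OF semigroup_bound[OF funpow_gen_env_bound[OF f]] \<omega>])
  also have "\<dots> \<le> 2^n * B * exp (2 * (\<bar>t\<bar> + 1))"
    using x env_bounded_nonneg[OF f] by (intro mult_left_mono) auto
  finally show ?thesis .
qed

lemma semigroup_remainder_bound:
  assumes f: "env_bounded f B" and \<omega>: "\<omega> \<in> env_space" and s: "\<bar>s - t\<bar> \<le> 1"
  shows "\<bar>semigroup s f \<omega> - semigroup t f \<omega> - (s - t) * semigroup t (gen_env f) \<omega>\<bar>
    \<le> 4 * B * exp (2 * (\<bar>t\<bar> + 1)) * (s - t)^2"
proof (rule Taylor_quadratic_remainder_bound[where S="{t - 1..t + 1}"])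
  fix x
  assume x: "x \<in> {t - 1..t + 1}"
  show "((\<lambda>x. semigroup x f \<omega>) has_real_derivative semigroup x (gen_env f) \<omega>)
      (at x within {t - 1..t + 1})"
    by (rule has_field_derivative_at_within[OF has_real_derivative_semigroup[OF f \<omega>]])
  show "((\<lambda>x. semigroup x (gen_env f) \<omega>) has_real_derivative semigroup x (gen_env (gen_env f)) \<omega>)
      (at x within {t - 1..t + 1})"
    by (rule has_field_derivative_at_within[OF has_real_derivative_semigroup[OF gen_env_bound[OF f] \<omega>]])
  have "\<bar>x - t\<bar> \<le> 1" using x by auto
  then show "\<bar>semigroup x (gen_env (gen_env f)) \<omega>\<bar> \<le> 4 * B * exp (2 * (\<bar>t\<bar> + 1))"
    using semigroup_funpow_gen_env_bound[OF f \<omega>, of x t 2] by (simp add: numeral_2_eq_2)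
qed (use s in auto)

lemma semigroup_square_remainder_bound:
  assumes f: "env_bounded f B" and \<omega>: "\<omega> \<in> env_space" and m: "\<bar>m\<bar> \<le> B" and s: "\<bar>s - t\<bar> \<le> 1"
  shows "\<bar>(semigroup s f \<omega> - m)^2 - (semigroup t f \<omega> - m)^2
      - (s - t) * (2 * (semigroup t f \<omega> - m) * semigroup t (gen_env f) \<omega>)\<bar>
    \<le> 6 * (2 * B * exp (2 * (\<bar>t\<bar> + 1)))^2 * (s - t)^2"
proof (rule Taylor_square_remainder_bound[where S="{t - 1..t + 1}" and v="\<lambda>x. semigroup x f \<omega>"
      and w="\<lambda>x. semigroup x (gen_env f) \<omega>" and z="\<lambda>x. semigroup x (gen_env (gen_env f)) \<omega>"
      and A="2 * B * exp (2 * (\<bar>t\<bar> + 1))"])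
  fix x
  assume "x \<in> {t - 1..t + 1}"
  then have x: "\<bar>x - t\<bar> \<le> 1" by auto
  have "B \<le> B * exp (2 * (\<bar>t\<bar> + 1))"
    using env_bounded_nonneg[OF f] by (simp add: mult_le_cancel_left1)
  then show "\<bar>semigroup x f \<omega> - m\<bar> \<le> 2 * B * exp (2 * (\<bar>t\<bar> + 1)) \<and>
      \<bar>semigroup x (gen_env f) \<omega>\<bar> \<le> 2 * B * exp (2 * (\<bar>t\<bar> + 1)) \<and>
      \<bar>semigroup x (gen_env (gen_env f)) \<omega>\<bar> \<le> 2 * (2 * B * exp (2 * (\<bar>t\<bar> + 1)))"
    using semigroup_funpow_gen_env_bound[OF f \<omega> x, of 0] semigroup_funpow_gen_env_bound[OF f \<omega> x, of 1]
      semigroup_funpow_gen_env_bound[OF f \<omega> x, of 2] m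
    by (auto simp: numeral_2_eq_2 abs_le_iff)
qed (use has_real_derivative_semigroup[OF f \<omega>] has_real_derivative_semigroup[OF gen_env_bound[OF f] \<omega>]
      s in auto)

lemma space_env_measure:
  assumes "sets \<mu> = sets (restrict_space borel pos_diag)"
  shows "space (env_measure \<mu>) = env_space"
proof -
  have "space \<mu> = pos_diag"
    using sets_eq_imp_space_eq[OF assms] by (simp add: space_restrict_space)
  then show ?thesis
    by (auto simp: env_measure_def space_PiM env_space_def PiE_def extensional_def)
qed

lemma measurable_env_component:
  fixes \<mu> :: "('d::finite \<Rightarrow> real) measure"
  assumes "sets \<mu> = sets (restrict_space borel pos_diag)"
  shows "(\<lambda>\<omega>. \<omega> x i) \<in> borel_measurable (env_measure \<mu>)"
proof -
  have "(\<lambda>\<omega>. \<omega> x) \<in> measurable (env_measure \<mu>) \<mu>"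
    unfolding env_measure_def by (rule measurable_component_singleton) simp
  moreover have "(\<lambda>a::'d \<Rightarrow> real. a i) \<in> borel_measurable (restrict_space borel pos_diag)"
    by (rule measurable_restrict_space1) measurable
  then have "(\<lambda>a::'d \<Rightarrow> real. a i) \<in> borel_measurable \<mu>"
    by (simp add: measurable_cong_sets[OF assms refl])
  ultimately show ?thesis by (rule measurable_compose)
qed

lemma measurable_shift:
  assumes "sets \<mu> = sets (restrict_space borel pos_diag)"
  shows "shift x \<in> measurable (env_measure \<mu>) (env_measure \<mu>)"
  unfolding shift_def[abs_def] env_measure_def
proof (rule measurable_PiM_single')
  show "(\<lambda>\<omega>. \<omega> (\<lambda>j. x j + y j)) \<in> measurable (Pi\<^sub>M UNIV (\<lambda>_. \<mu>)) \<mu>" for y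
    by (rule measurable_component_singleton) simp
qed (auto simp: space_PiM PiE_def)

lemma measurable_gen_env:
  assumes S: "sets \<mu> = sets (restrict_space borel pos_diag)"
    and f: "f \<in> borel_measurable (env_measure \<mu>)"
  shows "gen_env f \<in> borel_measurable (env_measure \<mu>)"
proof -
  note component = measurable_env_component[OF S]
  have shifted: "\<And>x. (\<lambda>\<omega>. f (shift x \<omega>)) \<in> borel_measurable (env_measure \<mu>)"
    using measurable_compose[OF measurable_shift[OF S] f] by simp
  have tr: "(\<lambda>\<omega>. tr (\<omega> origin)) \<in> borel_measurable (env_measure \<mu>)"
    unfolding tr_def using component by (intro borel_measurable_sum) auto
  show ?thesis
    unfolding gen_env_def[abs_def] using component tr shifted f
    by (intro borel_measurable_sum borel_measurable_times borel_measurable_divide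
        borel_measurable_add borel_measurable_diff borel_measurable_const) auto
qed

lemma measurable_semigroup:
  assumes S: "sets \<mu> = sets (restrict_space borel pos_diag)"
    and f: "f \<in> borel_measurable (env_measure \<mu>)" and "env_bounded f B"
  shows "semigroup s f \<in> borel_measurable (env_measure \<mu>)"
proof (rule borel_measurable_LIMSEQ_metric[where f="\<lambda>N \<omega>. \<Sum>n<N. semigroup_coeff f \<omega> n * s^n"])
  have "(gen_env ^^ n) f \<in> borel_measurable (env_measure \<mu>)" for n
    by (induction n) (auto intro: measurable_gen_env[OF S] f)
  then show "(\<lambda>\<omega>. \<Sum>n<N. semigroup_coeff f \<omega> n * s^n) \<in> borel_measurable (env_measure \<mu>)" for N
    unfolding semigroup_coeff_def by measurable
  show "(\<lambda>N. \<Sum>n<N. semigroup_coeff f \<omega> n * s^n) \<longlonglongrightarrow> semigroup s f \<omega>"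
    if "\<omega> \<in> space (env_measure \<mu>)" for \<omega>
    using that semigroup_sums[OF \<open>env_bounded f B\<close>] unfolding space_env_measure[OF S]
    by (simp add: sums_def)
qed

section \<open>Carre du champ\<close>

lemma unit_sites_eq: "(unit_sites :: ('d::finite) site set) = range unitvec \<union> range (\<lambda>i j. - unitvec i j)"
proof (intro equalityI subsetI)
  fix e :: "'d site"
  assume "e \<in> unit_sites"
  then have norm1: "(\<Sum>j\<in>UNIV. (e j)^2) = 1" by (simp add: unit_sites_def)
  then obtain i where i: "e i \<noteq> 0"
    by (metis (no_types, lifting) power_zero_numeral sum.neutral zero_neq_one)
  have "(\<Sum>j\<in>UNIV. (e j)^2) = (e i)^2 + (\<Sum>j\<in>UNIV - {i}. (e j)^2)"
    by (simp add: sum.remove)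
  moreover have "1 \<le> (e i)^2" using i by (simp add: int_one_le_iff_zero_less)
  moreover have "0 \<le> (\<Sum>j\<in>UNIV - {i}. (e j)^2)" by (simp add: sum_nonneg)
  ultimately have ei: "(e i)^2 = 1" and rest: "(\<Sum>j\<in>UNIV - {i}. (e j)^2) = 0"
    using norm1 by linarith+
  have "e j = 0" if "j \<noteq> i" for j
    using rest that by (subst (asm) sum_nonneg_eq_0_iff) auto
  moreover have "e i = 1 \<or> e i = -1" using ei by (simp add: power2_eq_1_iff)
  ultimately have "e = unitvec i \<or> e = (\<lambda>j. - unitvec i j)"
    by (auto simp: unitvec_def fun_eq_iff)
  then show "e \<in> range unitvec \<union> range (\<lambda>i j. - unitvec i j)" by blast
next
  have "(unitvec i j)^2 = (if j = i then 1 else 0)" for i j :: 'd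
    by (simp add: unitvec_def)
  then have "(\<Sum>j\<in>UNIV. (unitvec i j)^2) = 1" for i :: 'd
    by simp
  then show "e \<in> unit_sites" if "e \<in> range unitvec \<union> range (\<lambda>i j. - unitvec i j)" for e :: "'d site"
    using that by (auto simp: unit_sites_def)
qed

lemma sum_unit_sites:
  fixes F :: "('d::finite) site \<Rightarrow> real"
  shows "(\<Sum>e\<in>unit_sites. F e) = (\<Sum>i\<in>UNIV. F (unitvec i) + F (\<lambda>j. - unitvec i j))"
proof -
  have "inj (unitvec :: 'd \<Rightarrow> 'd site)" and "inj (\<lambda>(i::'d) j. - unitvec i j)"
    by (auto intro!: injI simp: unitvec_def fun_eq_iff split: if_splits)
  moreover have "range unitvec \<inter> range (\<lambda>(i::'d) j. - unitvec i j) = {}"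
    by (auto simp: unitvec_def fun_eq_iff split: if_splits)
  ultimately show ?thesis
    unfolding unit_sites_eq
    by (simp add: sum.union_disjoint sum.reindex sum.distrib)
qed

definition carre_du_champ :: "(('d::finite) env \<Rightarrow> real) \<Rightarrow> 'd env \<Rightarrow> real" where
  "carre_du_champ u \<omega> = (\<Sum>i\<in>UNIV. jump_rate \<omega> i *
      ((u (shift (unitvec i) \<omega>) - u \<omega>)^2 + (u (shift (\<lambda>j. - unitvec i j) \<omega>) - u \<omega>)^2))"

lemma gen_env_square: "gen_env (\<lambda>\<omega>. (u \<omega>)^2) \<omega> = 2 * u \<omega> * gen_env u \<omega> + carre_du_champ u \<omega>"
  unfolding gen_env_def carre_du_champ_def sum_distrib_left sum.distrib[symmetric]
  by (intro sum.cong refl) (simp add: power2_eq_square algebra_simps)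

lemma carre_du_champ_ge:
  assumes "\<And>i. 2 * \<kappa> \<le> \<omega> origin i / tr (\<omega> origin)"
  shows "\<kappa> * (\<Sum>e\<in>unit_sites. (u (shift e \<omega>) - u \<omega>)^2) \<le> carre_du_champ u \<omega>"
  unfolding sum_unit_sites sum_distrib_left carre_du_champ_def
proof (rule sum_mono)
  fix i
  have "\<kappa> \<le> jump_rate \<omega> i" using assms[of i] by simp
  then show "\<kappa> * ((u (shift (unitvec i) \<omega>) - u \<omega>)^2 + (u (shift (\<lambda>j. - unitvec i j) \<omega>) - u \<omega>)^2)
      \<le> jump_rate \<omega> i * ((u (shift (unitvec i) \<omega>) - u \<omega>)^2 + (u (shift (\<lambda>j. - unitvec i j) \<omega>) - u \<omega>)^2)"
    by (rule mult_right_mono) simp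
qed

lemma carre_du_champ_bound:
  fixes u :: "('d::finite) env \<Rightarrow> real"
  assumes u: "env_bounded u B"
  shows "env_bounded (carre_du_champ u) (6 * B^2)"
  unfolding env_bounded_def
proof
  fix \<omega> :: "'d env"
  assume \<omega>: "\<omega> \<in> env_space"
  have "env_bounded (gen_env (\<lambda>\<omega>. u \<omega> * u \<omega>)) (2 * (B * B))"
    by (intro gen_env_bound env_bounded_mult u)
  moreover have "env_bounded (\<lambda>\<omega>. u \<omega> * gen_env u \<omega>) (B * (2 * B))"
    by (intro env_bounded_mult gen_env_bound u)
  ultimately have "\<bar>gen_env (\<lambda>\<omega>. u \<omega> * u \<omega>) \<omega>\<bar> \<le> 2 * (B * B)"
    and "\<bar>u \<omega> * gen_env u \<omega>\<bar> \<le> B * (2 * B)"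
    using env_boundedD \<omega> by blast+
  moreover have "carre_du_champ u \<omega> = gen_env (\<lambda>\<omega>. u \<omega> * u \<omega>) \<omega> - 2 * (u \<omega> * gen_env u \<omega>)"
    using gen_env_square[of u \<omega>] by (simp add: power2_eq_square)
  ultimately show "\<bar>carre_du_champ u \<omega>\<bar> \<le> 6 * B^2"
    unfolding power2_eq_square by linarith
qed

lemma measurable_carre_du_champ:
  assumes S: "sets \<mu> = sets (restrict_space borel pos_diag)"
    and u: "u \<in> borel_measurable (env_measure \<mu>)"
  shows "carre_du_champ u \<in> borel_measurable (env_measure \<mu>)"
proof -
  have "carre_du_champ u = (\<lambda>\<omega>. gen_env (\<lambda>\<omega>. (u \<omega>)^2) \<omega> - 2 * u \<omega> * gen_env u \<omega>)"
    by (simp add: gen_env_square)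
  moreover have "(\<lambda>\<omega>. (u \<omega>)^2) \<in> borel_measurable (env_measure \<mu>)"
    using u by measurable
  ultimately show ?thesis
    using measurable_gen_env[OF S] u by simp
qed

section \<open>Invariant measures\<close>

locale invariant_env_measure =
  fixes \<mu> :: "('d::finite \<Rightarrow> real) measure" and Q :: "'d env measure"
  assumes sets_\<mu>: "sets \<mu> = sets (restrict_space borel pos_diag)"
    and prob_space_Q: "prob_space Q"
    and sets_Q: "sets Q = sets (env_measure \<mu>)"
    and integral_semigroup_invariant: "\<And>f s. f \<in> borel_measurable Q \<Longrightarrow> bounded_fun Q f \<Longrightarrow> 0 \<le> s \<Longrightarrow>
      (\<integral>\<omega>. semigroup s f \<omega> \<partial>Q) = (\<integral>\<omega>. f \<omega> \<partial>Q)"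
begin

lemma space_Q: "space Q = env_space"
  using sets_eq_imp_space_eq[OF sets_Q] space_env_measure[OF sets_\<mu>] by simp

lemma borel_measurable_Q: "borel_measurable Q = borel_measurable (env_measure \<mu>)"
  by (rule measurable_cong_sets[OF sets_Q refl])

lemma integrable_Q:
  assumes "f \<in> borel_measurable (env_measure \<mu>)" and "env_bounded f B"
  shows "integrable Q f"
proof -
  interpret prob_space Q by (rule prob_space_Q)
  show ?thesis
    using assms
    by (intro integrable_const_bound[where B=B] AE_I2) (auto simp: borel_measurable_Q space_Q env_bounded_def)
qed

lemma integral_semigroup:
  assumes "f \<in> borel_measurable (env_measure \<mu>)" and "env_bounded f B" and "0 \<le> s"
  shows "(\<integral>\<omega>. semigroup s f \<omega> \<partial>Q) = (\<integral>\<omega>. f \<omega> \<partial>Q)"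
  using assms
  by (intro integral_semigroup_invariant) (auto simp: borel_measurable_Q bounded_fun_def space_Q env_bounded_def)

lemma integral_gen_env_eq_0:
  assumes g: "g \<in> borel_measurable (env_measure \<mu>)" and "env_bounded g B"
  shows "(\<integral>\<omega>. gen_env g \<omega> \<partial>Q) = 0"
proof -
  \<comment> \<open>?I is constant on [0, \<infinity>), so its one-sided derivative at 0 vanishes.\<close>
  let ?I = "\<lambda>s. \<integral>\<omega>. semigroup s g \<omega> \<partial>Q"
  have "(?I has_real_derivative (\<integral>\<omega>. gen_env g \<omega> \<partial>Q)) (at 0)"
  proof (rule has_real_derivative_integral[where K="4 * B * exp 2"])
    show "finite_measure Q"
      using prob_space_Q by (simp add: prob_space_def)
    show "integrable Q (semigroup s g)" for s
      by (rule integrable_Q[OF measurable_semigroup[OF sets_\<mu> g \<open>env_bounded g B\<close>]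
            semigroup_bound[OF \<open>env_bounded g B\<close>]])
    show "integrable Q (gen_env g)"
      by (rule integrable_Q[OF measurable_gen_env[OF sets_\<mu> g] gen_env_bound[OF \<open>env_bounded g B\<close>]])
    show "\<bar>semigroup s g \<omega> - semigroup 0 g \<omega> - (s - 0) * gen_env g \<omega>\<bar>
        \<le> 4 * B * exp 2 * (s - 0)^2"
      if "\<bar>s - 0\<bar> \<le> 1" and "\<omega> \<in> space Q" for s \<omega>
      using semigroup_remainder_bound[OF \<open>env_bounded g B\<close> _ that(1)] that(2)
      unfolding space_Q by simp
  qed
  then have "(?I has_real_derivative (\<integral>\<omega>. gen_env g \<omega> \<partial>Q)) (at 0 within {0..})"
    by (rule has_field_derivative_at_within)
  moreover have "(?I has_real_derivative 0) (at 0 within {0..})"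
    using assms
    by (intro has_field_derivative_transform_within[OF DERIV_const zero_less_one])
      (auto simp: integral_semigroup)
  ultimately show ?thesis
    by (rule has_field_derivative_unique) (simp add: at_within_Ici_at_right)
qed

lemma integral_mult_gen_env_self:
  assumes u: "u \<in> borel_measurable (env_measure \<mu>)" and "env_bounded u B"
  shows "(\<integral>\<omega>. 2 * u \<omega> * gen_env u \<omega> \<partial>Q) = - (\<integral>\<omega>. carre_du_champ u \<omega> \<partial>Q)"
proof -
  have u2: "(\<lambda>\<omega>. (u \<omega>)^2) \<in> borel_measurable (env_measure \<mu>)"
    using u by measurable
  note u2_bounded = env_bounded_power2[OF \<open>env_bounded u B\<close>]
  have "(\<integral>\<omega>. 2 * u \<omega> * gen_env u \<omega> \<partial>Q)
      = (\<integral>\<omega>. gen_env (\<lambda>\<omega>. (u \<omega>)^2) \<omega> - carre_du_champ u \<omega> \<partial>Q)"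
    by (simp add: gen_env_square)
  also have "\<dots> = (\<integral>\<omega>. gen_env (\<lambda>\<omega>. (u \<omega>)^2) \<omega> \<partial>Q) - (\<integral>\<omega>. carre_du_champ u \<omega> \<partial>Q)"
    by (intro Bochner_Integration.integral_diff
        integrable_Q[OF measurable_gen_env[OF sets_\<mu> u2] gen_env_bound[OF u2_bounded]]
        integrable_Q[OF measurable_carre_du_champ[OF sets_\<mu> u] carre_du_champ_bound[OF \<open>env_bounded u B\<close>]])
  also have "\<dots> = - (\<integral>\<omega>. carre_du_champ u \<omega> \<partial>Q)"
    using integral_gen_env_eq_0[OF u2 u2_bounded] by simp
  finally show ?thesis .
qed

lemma has_real_derivative_integral_square_semigroup:
  assumes \<zeta>: "\<zeta> \<in> borel_measurable (env_measure \<mu>)" and B: "env_bounded \<zeta> B" and m: "\<bar>m\<bar> \<le> B"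
  shows "((\<lambda>s. \<integral>\<omega>. (semigroup s \<zeta> \<omega> - m)^2 \<partial>Q) has_real_derivative
      (\<integral>\<omega>. 2 * (semigroup t \<zeta> \<omega> - m) * semigroup t (gen_env \<zeta>) \<omega> \<partial>Q)) (at t)"
proof (rule has_real_derivative_integral[where K="6 * (2 * B * exp (2 * (\<bar>t\<bar> + 1)))^2"])
  have v: "semigroup s \<zeta> \<in> borel_measurable (env_measure \<mu>)" for s
    by (rule measurable_semigroup[OF sets_\<mu> \<zeta> B])
  have w: "semigroup t (gen_env \<zeta>) \<in> borel_measurable (env_measure \<mu>)"
    by (rule measurable_semigroup[OF sets_\<mu> measurable_gen_env[OF sets_\<mu> \<zeta>] gen_env_bound[OF B]])
  have centred: "env_bounded (\<lambda>\<omega>. semigroup s \<zeta> \<omega> - m) (B * exp (2 * \<bar>s\<bar>) + \<bar>m\<bar>)" for s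
    by (rule env_bounded_diff[OF semigroup_bound[OF B] env_bounded_const])
  show "finite_measure Q"
    using prob_space_Q by (simp add: prob_space_def)
  show "integrable Q (\<lambda>\<omega>. (semigroup s \<zeta> \<omega> - m)^2)" for s
    by (rule integrable_Q[OF _ env_bounded_power2[OF centred]]) (use v in measurable)
  show "integrable Q (\<lambda>\<omega>. 2 * (semigroup t \<zeta> \<omega> - m) * semigroup t (gen_env \<zeta>) \<omega>)"
    by (rule integrable_Q[OF _ env_bounded_mult[OF env_bounded_mult[OF env_bounded_const centred]
          semigroup_bound[OF gen_env_bound[OF B]]]]) (use v w in measurable)
  show "\<bar>(semigroup s \<zeta> \<omega> - m)^2 - (semigroup t \<zeta> \<omega> - m)^2
      - (s - t) * (2 * (semigroup t \<zeta> \<omega> - m) * semigroup t (gen_env \<zeta>) \<omega>)\<bar>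
      \<le> 6 * (2 * B * exp (2 * (\<bar>t\<bar> + 1)))^2 * (s - t)^2"
    if "\<bar>s - t\<bar> \<le> 1" and "\<omega> \<in> space Q" for s \<omega>
    using semigroup_square_remainder_bound[OF B _ m that(1)] that(2) unfolding space_Q by simp
qed

lemma has_real_derivative_variance:
  assumes \<zeta>: "\<zeta> \<in> borel_measurable (env_measure \<mu>)" and B: "env_bounded \<zeta> B" and "0 \<le> t"
  shows "((\<lambda>s. \<integral>\<omega>. (semigroup s \<zeta> \<omega> - (\<integral>\<omega>'. semigroup s \<zeta> \<omega>' \<partial>Q))^2 \<partial>Q)
      has_real_derivative - (\<integral>\<omega>. carre_du_champ (\<lambda>\<omega>. semigroup t \<zeta> \<omega> - (\<integral>\<omega>'. \<zeta> \<omega>' \<partial>Q)) \<omega> \<partial>Q))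
    (at t within {0..})"
proof -
  interpret prob_space Q by (rule prob_space_Q)
  define m where "m = (\<integral>\<omega>. \<zeta> \<omega> \<partial>Q)"
  define u where "u = (\<lambda>\<omega>. semigroup t \<zeta> \<omega> - m)"
  have m: "\<bar>m\<bar> \<le> B"
    unfolding m_def using integrable_Q[OF \<zeta> B] B
    by (intro order_trans[OF integral_abs_bound] integral_le_const AE_I2)
      (auto simp: space_Q env_bounded_def)
  \<comment> \<open>On [0, \<infinity>) the mean of P_s \<zeta> is m, so the variance may be replaced by a function
    that is differentiable on all of the real line.\<close>
  note has_real_derivative_integral_square_semigroup[OF \<zeta> B m, of t]
  also have "(\<integral>\<omega>. 2 * (semigroup t \<zeta> \<omega> - m) * semigroup t (gen_env \<zeta>) \<omega> \<partial>Q)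
      = (\<integral>\<omega>. 2 * u \<omega> * gen_env u \<omega> \<partial>Q)"
    unfolding u_def
    by (intro Bochner_Integration.integral_cong refl) (simp add: space_Q gen_env_diff_const gen_env_semigroup[OF B])
  also have "\<dots> = - (\<integral>\<omega>. carre_du_champ u \<omega> \<partial>Q)"
    unfolding u_def
    by (rule integral_mult_gen_env_self[OF _ env_bounded_diff[OF semigroup_bound[OF B] env_bounded_const]])
      (use measurable_semigroup[OF sets_\<mu> \<zeta> B] in measurable)
  finally have "((\<lambda>s. \<integral>\<omega>. (semigroup s \<zeta> \<omega> - m)^2 \<partial>Q) has_real_derivative
      - (\<integral>\<omega>. carre_du_champ u \<omega> \<partial>Q)) (at t within {0..})"
    by (rule has_field_derivative_at_within)
  then show ?thesis
    unfolding u_def m_def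
    by (rule has_field_derivative_transform_within[OF _ zero_less_one])
      (use \<open>0 \<le> t\<close> in \<open>auto simp: integral_semigroup[OF \<zeta> B]\<close>)
qed

lemma integral_carre_du_champ_ge:
  assumes u: "u \<in> borel_measurable (env_measure \<mu>)" "env_bounded u B"
    and elliptic: "AE \<omega> in Q. \<forall>i. 2 * \<kappa> \<le> \<omega> origin i / tr (\<omega> origin)"
  shows "\<kappa> * (\<Sum>e\<in>unit_sites. \<integral>\<omega>. (u (shift e \<omega>) - u \<omega>)^2 \<partial>Q) \<le> (\<integral>\<omega>. carre_du_champ u \<omega> \<partial>Q)"
proof -
  have int: "integrable Q (\<lambda>\<omega>. (u (shift e \<omega>) - u \<omega>)^2)" for e
    by (rule integrable_Q[OF _ env_bounded_power2[OF env_bounded_diff[OF env_bounded_shift[OF u(2)] u(2)]]])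
      (use measurable_compose[OF measurable_shift[OF sets_\<mu>] u(1)] u(1) in measurable)
  have "\<kappa> * (\<Sum>e\<in>unit_sites. \<integral>\<omega>. (u (shift e \<omega>) - u \<omega>)^2 \<partial>Q)
      = (\<integral>\<omega>. \<kappa> * (\<Sum>e\<in>unit_sites. (u (shift e \<omega>) - u \<omega>)^2) \<partial>Q)"
    using int by (simp add: integral_sum)
  also have "\<dots> \<le> (\<integral>\<omega>. carre_du_champ u \<omega> \<partial>Q)"
  proof (rule integral_mono_AE)
    show "integrable Q (carre_du_champ u)"
      by (rule integrable_Q[OF measurable_carre_du_champ[OF sets_\<mu> u(1)] carre_du_champ_bound[OF u(2)]])
    show "AE \<omega> in Q. \<kappa> * (\<Sum>e\<in>unit_sites. (u (shift e \<omega>) - u \<omega>)^2) \<le> carre_du_champ u \<omega>"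
      using elliptic by eventually_elim (blast intro: carre_du_champ_ge)
  qed (use int in simp)
  finally show ?thesis .
qed

lemma has_real_derivative_variance_le:
  assumes \<zeta>: "\<zeta> \<in> borel_measurable (env_measure \<mu>)" and B: "env_bounded \<zeta> B" and "0 \<le> t"
    and elliptic: "AE \<omega> in Q. \<forall>x i. 2 * \<kappa> \<le> \<omega> x i / tr (\<omega> x)"
  shows "\<exists>D. ((\<lambda>s. \<integral>\<omega>. (semigroup s \<zeta> \<omega> - (\<integral>\<omega>'. semigroup s \<zeta> \<omega>' \<partial>Q))^2 \<partial>Q)
      has_real_derivative D) (at t within {0..}) \<and>
    D \<le> - \<kappa> * (\<Sum>e\<in>unit_sites. \<integral>\<omega>. (semigroup t \<zeta> (shift e \<omega>) - semigroup t \<zeta> \<omega>)^2 \<partial>Q)"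
proof -
  define u where "u = (\<lambda>\<omega>. semigroup t \<zeta> \<omega> - (\<integral>\<omega>'. \<zeta> \<omega>' \<partial>Q))"
  have "AE \<omega> in Q. \<forall>i. 2 * \<kappa> \<le> \<omega> origin i / tr (\<omega> origin)"
    using elliptic by (rule eventually_mono) blast
  then have "\<kappa> * (\<Sum>e\<in>unit_sites. \<integral>\<omega>. (u (shift e \<omega>) - u \<omega>)^2 \<partial>Q) \<le> (\<integral>\<omega>. carre_du_champ u \<omega> \<partial>Q)"
    unfolding u_def
    by (intro integral_carre_du_champ_ge[OF _ env_bounded_diff[OF semigroup_bound[OF B] env_bounded_const]])
      (use measurable_semigroup[OF sets_\<mu> \<zeta> B] in measurable)
  then have "- (\<integral>\<omega>. carre_du_champ u \<omega> \<partial>Q)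
      \<le> - \<kappa> * (\<Sum>e\<in>unit_sites. \<integral>\<omega>. (semigroup t \<zeta> (shift e \<omega>) - semigroup t \<zeta> \<omega>)^2 \<partial>Q)"
    by (simp add: u_def)
  moreover have "((\<lambda>s. \<integral>\<omega>. (semigroup s \<zeta> \<omega> - (\<integral>\<omega>'. semigroup s \<zeta> \<omega>' \<partial>Q))^2 \<partial>Q)
      has_real_derivative - (\<integral>\<omega>. carre_du_champ u \<omega> \<partial>Q)) (at t within {0..})"
    unfolding u_def by (rule has_real_derivative_variance[OF \<zeta> B \<open>0 \<le> t\<close>])
  ultimately show ?thesis by blast
qed

end

theorem lemma3p2:
  fixes \<kappa> :: real
  assumes "0 < \<kappa>" and "\<kappa> \<le> 1 / (2 * real CARD('d::finite))"
  shows "\<exists>C>0. \<forall>(\<mu>::('d \<Rightarrow> real) measure) Q \<zeta> t.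
     prob_space \<mu> \<and> sets \<mu> = sets (restrict_space borel pos_diag) \<and>
     (AE \<omega> in env_measure \<mu>. \<forall>x i. 2 * \<kappa> \<le> \<omega> x i / tr (\<omega> x)) \<and>
     invariant_ergodic_equiv (env_measure \<mu>) Q \<and>
     \<zeta> \<in> borel_measurable (env_measure \<mu>) \<and> bounded_fun (env_measure \<mu>) \<zeta> \<and> 0 \<le> t
     \<longrightarrow> (\<exists>D. ((\<lambda>s. \<integral>\<omega>. (semigroup s \<zeta> \<omega> - (\<integral>\<omega>'. semigroup s \<zeta> \<omega>' \<partial>Q))^2 \<partial>Q)
                 has_real_derivative D) (at t within {0..}) \<and>
             D \<le> - C * (\<Sum>e\<in>unit_sites. \<integral>\<omega>. (semigroup t \<zeta> (shift e \<omega>) - semigroup t \<zeta> \<omega>)^2 \<partial>Q))"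
proof (rule exI[of _ \<kappa>], intro conjI allI impI)
  show "0 < \<kappa>" by fact
  fix \<mu> :: "('d \<Rightarrow> real) measure" and Q :: "'d env measure"
    and \<zeta> :: "'d env \<Rightarrow> real" and t :: real
  assume "prob_space \<mu> \<and> sets \<mu> = sets (restrict_space borel pos_diag) \<and>
     (AE \<omega> in env_measure \<mu>. \<forall>x i. 2 * \<kappa> \<le> \<omega> x i / tr (\<omega> x)) \<and>
     invariant_ergodic_equiv (env_measure \<mu>) Q \<and>
     \<zeta> \<in> borel_measurable (env_measure \<mu>) \<and> bounded_fun (env_measure \<mu>) \<zeta> \<and> 0 \<le> t"
  then have S: "sets \<mu> = sets (restrict_space borel pos_diag)"
    and elliptic: "AE \<omega> in env_measure \<mu>. \<forall>x i. 2 * \<kappa> \<le> \<omega> x i / tr (\<omega> x)"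
    and "prob_space Q" and sets_Q: "sets Q = sets (env_measure \<mu>)"
    and "absolutely_continuous (env_measure \<mu>) Q"
    and invariant: "\<And>f s. f \<in> borel_measurable Q \<Longrightarrow> bounded_fun Q f \<Longrightarrow> 0 \<le> s \<Longrightarrow>
      (\<integral>\<omega>. semigroup s f \<omega> \<partial>Q) = (\<integral>\<omega>. f \<omega> \<partial>Q)"
    and \<zeta>: "\<zeta> \<in> borel_measurable (env_measure \<mu>)" and "bounded_fun (env_measure \<mu>) \<zeta>" and "0 \<le> t"
    unfolding invariant_ergodic_equiv_def by blast+
  interpret invariant_env_measure \<mu> Q
    by (rule invariant_env_measure.intro[OF S \<open>prob_space Q\<close> sets_Q invariant])
  obtain B where "env_bounded \<zeta> B"
    using \<open>bounded_fun (env_measure \<mu>) \<zeta>\<close>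
    unfolding bounded_fun_def env_bounded_def space_env_measure[OF S] by blast
  moreover have "AE \<omega> in Q. \<forall>x i. 2 * \<kappa> \<le> \<omega> x i / tr (\<omega> x)"
    by (rule absolutely_continuous_AE[OF sets_Q \<open>absolutely_continuous (env_measure \<mu>) Q\<close> elliptic])
  ultimately show "\<exists>D. ((\<lambda>s. \<integral>\<omega>. (semigroup s \<zeta> \<omega> - (\<integral>\<omega>'. semigroup s \<zeta> \<omega>' \<partial>Q))^2 \<partial>Q)
                 has_real_derivative D) (at t within {0..}) \<and>
             D \<le> - \<kappa> * (\<Sum>e\<in>unit_sites. \<integral>\<omega>. (semigroup t \<zeta> (shift e \<omega>) - semigroup t \<zeta> \<omega>)^2 \<partial>Q)"
    using has_real_derivative_variance_le[OF \<zeta> _ \<open>0 \<le> t\<close>] by blast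
qed

end
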